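(* Let $H=(V,f)$ be a separated labeled hypergraph, let $W\subseteq V$ be the set of vertices of $H$ that are not closed, and let $H'=H|_W$ be the induced subhypergraph obtained by removing all closed vertices (and contracting the edges containing them). Then $\mathcal A[H]=k[H]$ if and only if $\mathcal A[H']=k[H']$.
   Context: Let $k$ be a field and $S=k[x_1,\dots,x_n,y]$. For an integral convex polytope $\mathcal P\subseteq\mathbb R^n_{\ge 0}$, the Ehrhart ring $\mathcal A[\mathcal P]$ is the $k$-subspace (a subalgebra) of $S$ spanned by the monomials $x^{\mathbf a}y^t$ with $t\in\mathbb N$ and $\mathbf a\in t\mathcal P\cap\mathbb Z^n$; the polytopal (toric) ring is $k[\mathcal P]=k[x^{\mathbf a}y:\mathbf a\in\mathcal P\cap\mathbb Z^n]\subseteq S$. A labeled hypergraph $H=(V,f)$ on a finite set $V$ with alphabet $\{x_1,\dots,x_n\}$ is a function $f:\{x_1,\dots,x_n\}\to\mathcal P(V)$; its edges are the nonempty sets in the image of $f$, and the labels of an edge $E$ are the $x$ with $f(x)=E$. $H$ is separated if for all distinct $v,w\in V$ there are edges $F,G$ with $v\in F\setminus G$, $w\in G\setminus F$. For separated $H$, let $m_v=\prod_{x:\,v\in f(x)}x=x^{\mathbf a_v}$ ($v\in V$), let $\mathcal P_H$ be the convex hull of $\{\mathbf a_v:v\in V\}$ (a 0-1 polytope), and set $\mathcal A[H]=\mathcal A[\mathcal P_H]$, $k[H]=k[\mathcal P_H]$. A vertex $v$ is closed if $\{v\}$ is an edge of $H$. For $W\subseteq V$, the induced subhypergraph is $H|_W=(W,f_W)$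 with $f_W(x)=f(x)\cap W$ (it is again separated). *)

theory Defs
  imports "HOL-Analysis.Analysis" "HOL-Library.Poly_Mapping"
begin

text \<open>Polynomial ring S = k[x_i (i :: 'n), y]: elements are finitely supported maps from
  exponent vectors (finitely supported maps 'n option => nat, where Some i stands for x_i
  and None stands for y) to coefficients in k.\<close>

type_synonym ('n, 'k) Spoly = "('n option \<Rightarrow>\<^sub>0 nat) \<Rightarrow>\<^sub>0 'k"

definition expo :: "('n::finite \<Rightarrow> nat) \<Rightarrow> nat \<Rightarrow> ('n option \<Rightarrow>\<^sub>0 nat)" where
  "expo a t = Poly_Mapping.single None t + (\<Sum>i\<in>UNIV. Poly_Mapping.single (Some i) (a i))"

definition monom_S :: "('n option \<Rightarrow>\<^sub>0 nat) \<Rightarrow> ('n, 'k::field) Spoly" where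
  "monom_S m = Poly_Mapping.single m 1"

definition monomial_span :: "('n option \<Rightarrow>\<^sub>0 nat) set \<Rightarrow> ('n, 'k::field) Spoly set" where
  "monomial_span E = {(\<Sum>m\<in>M. Poly_Mapping.single 0 (c m) * monom_S m) | M c. finite M \<and> M \<subseteq> E}"

inductive_set alg_gen :: "('n, 'k::field) Spoly set \<Rightarrow> ('n, 'k) Spoly set" for G where
  gen: "g \<in> G \<Longrightarrow> g \<in> alg_gen G"
| one: "1 \<in> alg_gen G"
| scal: "p \<in> alg_gen G \<Longrightarrow> Poly_Mapping.single 0 c * p \<in> alg_gen G"
| add: "p \<in> alg_gen G \<Longrightarrow> q \<in> alg_gen G \<Longrightarrow> p + q \<in> alg_gen G"
| mult: "p \<in> alg_gen G \<Longrightarrow> q \<in> alg_gen G \<Longrightarrow> p * q \<in> alg_gen G"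

definition ofv :: "('n::finite \<Rightarrow> nat) \<Rightarrow> real^'n" where
  "ofv a = (\<chi> i. real (a i))"

text \<open>Exponents of the monomials x^a y^t with a in tP (lattice point); the pair (0,0)
  (monomial 1) is always included, i.e. 0P = {0} by convention.\<close>
definition ehrhart_exps :: "(real^'n::finite) set \<Rightarrow> ('n option \<Rightarrow>\<^sub>0 nat) set" where
  "ehrhart_exps P = {expo a t | a t. ofv a \<in> (\<lambda>x. real t *\<^sub>R x) ` P \<or> (t = 0 \<and> a = (\<lambda>_. 0))}"

definition ehrhart_ring :: "(real^'n::finite) set \<Rightarrow> ('n, 'k::field) Spoly set" where
  "ehrhart_ring P = monomial_span (ehrhart_exps P)"

definition polytopal_ring :: "(real^'n::finite) set \<Rightarrow> ('n, 'k::field) Spoly set" where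
  "polytopal_ring P = alg_gen {monom_S (expo a 1) | a. ofv a \<in> P}"

definition labeled_hypergraph :: "'v set \<Rightarrow> ('n \<Rightarrow> 'v set) \<Rightarrow> bool" where
  "labeled_hypergraph V f \<longleftrightarrow> finite V \<and> (\<forall>x. f x \<subseteq> V)"

definition hg_edges :: "('n \<Rightarrow> 'v set) \<Rightarrow> 'v set set" where
  "hg_edges f = {E. E \<in> range f \<and> E \<noteq> {}}"

definition separated :: "'v set \<Rightarrow> ('n \<Rightarrow> 'v set) \<Rightarrow> bool" where
  "separated V f \<longleftrightarrow> (\<forall>v\<in>V. \<forall>w\<in>V. v \<noteq> w \<longrightarrow>
      (\<exists>F\<in>hg_edges f. \<exists>G\<in>hg_edges f. v \<in> F - G \<and> w \<in> G - F))"

definition closed_vertex :: "('n \<Rightarrow> 'v set) \<Rightarrow> 'v \<Rightarrow> bool" where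
  "closed_vertex f v \<longleftrightarrow> {v} \<in> hg_edges f"

definition induced :: "('n \<Rightarrow> 'v set) \<Rightarrow> 'v set \<Rightarrow> ('n \<Rightarrow> 'v set)" where
  "induced f W = (\<lambda>x. f x \<inter> W)"

definition vertex_vec :: "('n::finite \<Rightarrow> 'v set) \<Rightarrow> 'v \<Rightarrow> real^'n" where
  "vertex_vec f v = (\<chi> x. if v \<in> f x then 1 else 0)"

definition hg_polytope :: "'v set \<Rightarrow> ('n::finite \<Rightarrow> 'v set) \<Rightarrow> (real^'n) set" where
  "hg_polytope V f = convex hull (vertex_vec f ` V)"

end

theory Submission
  imports Defs
begin

text \<open>Both rings are spanned by monomials, so their equality is a statement about exponents:
  every lattice point of a dilate \<open>k\<cdot>P\<close> must be a sum of \<open>k\<close> lattice points of \<open>P\<close>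
  (the integer decomposition property).  A closed vertex \<open>v\<close>, say \<open>f x = {v}\<close>, is the only
  vertex whose vector has a nonzero \<open>x\<close>-coordinate, so \<open>P\<^sub>H\<close> is a lattice pyramid of
  height one over \<open>P\<^sub>H\<^sub>'\<close>.  Splitting off the apex coordinate shows that a pyramid of
  height one has the property if and only if its base has.\<close>

lemma sum_single_lookup_keys:
  "(\<Sum>m\<in>Poly_Mapping.keys p. Poly_Mapping.single m (Poly_Mapping.lookup p m)) = p"
proof (rule poly_mapping_eqI)
  fix k
  have "Poly_Mapping.lookup (\<Sum>m\<in>Poly_Mapping.keys p. Poly_Mapping.single m (Poly_Mapping.lookup p m)) k
      = (\<Sum>m\<in>Poly_Mapping.keys p. if m = k then Poly_Mapping.lookup p m else 0)"
    by (simp add: lookup_sum lookup_single when_def)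
  also have "\<dots> = Poly_Mapping.lookup p k"
    by (cases "k \<in> Poly_Mapping.keys p") (auto simp: in_keys_iff)
  finally show "Poly_Mapping.lookup (\<Sum>m\<in>Poly_Mapping.keys p. Poly_Mapping.single m (Poly_Mapping.lookup p m)) k
      = Poly_Mapping.lookup p k" .
qed

lemma single_0_mult_monom_S: "Poly_Mapping.single 0 c * monom_S m = Poly_Mapping.single m (c::'k::field)"
  by (simp add: monom_S_def mult_single)

lemma monom_S_add: "monom_S (m1 + m2) = (monom_S m1 * monom_S m2 :: ('n, 'k::field) Spoly)"
  by (simp add: monom_S_def mult_single)

lemma monomial_span_eq_keys: "monomial_span E = {p :: ('n, 'k::field) Spoly. Poly_Mapping.keys p \<subseteq> E}"
proof (intro set_eqI iffI)
  fix p :: "('n, 'k) Spoly"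
  assume "p \<in> monomial_span E"
  then obtain M c where p: "p = (\<Sum>m\<in>M. Poly_Mapping.single m (c m))" and "M \<subseteq> E"
    unfolding monomial_span_def single_0_mult_monom_S by auto
  then show "p \<in> {p. Poly_Mapping.keys p \<subseteq> E}"
    using keys_sum[of "\<lambda>m. Poly_Mapping.single m (c m)" M] by auto
next
  fix p :: "('n, 'k) Spoly"
  assume "p \<in> {p. Poly_Mapping.keys p \<subseteq> E}"
  then show "p \<in> monomial_span E"
    unfolding monomial_span_def single_0_mult_monom_S
    by (intro CollectI exI[of _ "Poly_Mapping.keys p"] exI[of _ "Poly_Mapping.lookup p"])
      (auto simp: sum_single_lookup_keys)
qed

lemma keys_subset_sets_eq_iff:
  "{p :: 'a \<Rightarrow>\<^sub>0 'k::field. Poly_Mapping.keys p \<subseteq> X} = {p. Poly_Mapping.keys p \<subseteq> Y} \<longleftrightarrow> X = Y"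
proof
  assume eq: "{p :: 'a \<Rightarrow>\<^sub>0 'k. Poly_Mapping.keys p \<subseteq> X} = {p. Poly_Mapping.keys p \<subseteq> Y}"
  have "m \<in> X \<longleftrightarrow> m \<in> Y" for m
    using eq[THEN equalityD1, THEN subsetD, of "Poly_Mapping.single m 1"]
      eq[THEN equalityD2, THEN subsetD, of "Poly_Mapping.single m 1"] by auto
  then show "X = Y" by auto
qed simp

lemma alg_gen_zero: "0 \<in> alg_gen G"
  using alg_gen.scal[OF alg_gen.one, where c = 0] by simp

lemma alg_gen_sum: "finite A \<Longrightarrow> (\<And>x. x \<in> A \<Longrightarrow> g x \<in> alg_gen G) \<Longrightarrow> sum g A \<in> alg_gen G"
  by (induction A rule: finite_induct) (auto intro: alg_gen.intros alg_gen_zero)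

lemma expo_add: "expo a t + expo b s = expo (\<lambda>j. a j + b j) (t + s)"
  by (simp add: expo_def single_add sum.distrib algebra_simps)

lemma expo_zero: "expo (\<lambda>_. 0) 0 = 0"
  by (simp add: expo_def)

lemma lookup_expo_None: "Poly_Mapping.lookup (expo a t) None = t"
  by (simp add: expo_def lookup_add lookup_sum lookup_single)

lemma lookup_expo_Some: "Poly_Mapping.lookup (expo a t) (Some i) = a i"
proof -
  have "Poly_Mapping.lookup (expo a t) (Some i) = (\<Sum>j\<in>UNIV. if j = i then a j else 0)"
    by (simp add: expo_def lookup_add lookup_sum lookup_single when_def)
  then show ?thesis by simp
qed

lemma inj_expo: "inj (case_prod expo)"
proof (rule injI, clarify)
  fix a t b s assume eq: "expo a t = expo b s"
  show "a = b \<and> t = s"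
    using arg_cong[OF eq, of "\<lambda>p. Poly_Mapping.lookup p (Some _)"]
      arg_cong[OF eq, of "\<lambda>p. Poly_Mapping.lookup p None"]
    by (auto simp: lookup_expo_Some lookup_expo_None)
qed

lemma ofv_nth [simp]: "ofv a $ j = real (a j)"
  by (simp add: ofv_def)

lemma ofv_add: "ofv (\<lambda>j. a j + b j) = ofv a + ofv b"
  by (simp add: ofv_def vec_eq_iff)

lemma ofv_eq_0_iff: "ofv a = 0 \<longleftrightarrow> a = (\<lambda>_. 0)"
  by (auto simp: ofv_def vec_eq_iff)

text \<open>\<open>(a, k) \<in> lattice_sums P\<close> iff \<open>x\<^sup>a y\<^sup>k\<close> is a product of \<open>k\<close> generators of \<open>k[P]\<close>, and
  \<open>(a, k) \<in> dilate_points P\<close> iff \<open>x\<^sup>a y\<^sup>k\<close> is one of the monomials spanning \<open>\<A>[P]\<close>.\<close>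

inductive_set lattice_sums :: "(real^'n::finite) set \<Rightarrow> (('n \<Rightarrow> nat) \<times> nat) set" for P where
  zero: "((\<lambda>_. 0), 0) \<in> lattice_sums P"
| add_point: "(a, k) \<in> lattice_sums P \<Longrightarrow> ofv b \<in> P \<Longrightarrow> ((\<lambda>j. a j + b j), Suc k) \<in> lattice_sums P"

definition dilate_points :: "(real^'n::finite) set \<Rightarrow> (('n \<Rightarrow> nat) \<times> nat) set" where
  "dilate_points P = {(a, k). ofv a \<in> (\<lambda>x. real k *\<^sub>R x) ` P \<or> (k = 0 \<and> a = (\<lambda>_. 0))}"

definition IDP :: "(real^'n::finite) set \<Rightarrow> bool" where
  "IDP P \<longleftrightarrow> dilate_points P \<subseteq> lattice_sums P"

lemma lattice_sums_add:
  "(b, l) \<in> lattice_sums P \<Longrightarrow> (a, k) \<in> lattice_sums P \<Longrightarrow> ((\<lambda>j. a j + b j), k + l) \<in> lattice_sums P"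
proof (induction rule: lattice_sums.induct)
  case (add_point b l c)
  then have "((\<lambda>j. (a j + b j) + c j), Suc (k + l)) \<in> lattice_sums P"
    by (intro lattice_sums.add_point) auto
  then show ?case by (simp add: add.assoc)
qed simp

lemma lattice_sums_add_multiple:
  "(a, k) \<in> lattice_sums P \<Longrightarrow> ofv b \<in> P \<Longrightarrow> ((\<lambda>j. a j + m * b j), k + m) \<in> lattice_sums P"
proof (induction m)
  case (Suc m)
  then have "((\<lambda>j. (a j + m * b j) + b j), Suc (k + m)) \<in> lattice_sums P"
    by (intro lattice_sums.add_point) auto
  then show ?case by (simp add: algebra_simps)
qed simp

lemma lattice_sums_mono: "(a, k) \<in> lattice_sums P \<Longrightarrow> P \<subseteq> Q \<Longrightarrow> (a, k) \<in> lattice_sums Q"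
  by (induction rule: lattice_sums.induct) (auto intro: lattice_sums.intros)

lemma lattice_sums_subset_dilate_points:
  assumes "convex P"
  shows "lattice_sums P \<subseteq> dilate_points P"
proof clarify
  fix a k assume "(a, k) \<in> lattice_sums P"
  then show "(a, k) \<in> dilate_points P"
  proof (induction rule: lattice_sums.induct)
    case (add_point a k b)
    show ?case
    proof (cases "k = 0")
      case True
      with add_point have "a = (\<lambda>_. 0)" by (auto simp: dilate_points_def ofv_eq_0_iff)
      with add_point True show ?thesis by (auto simp: dilate_points_def)
    next
      case False
      then obtain x where x: "x \<in> P" "ofv a = real k *\<^sub>R x"
        using add_point by (auto simp: dilate_points_def)
      define u where "u = real k / real (Suc k)"
      have "u *\<^sub>R x + (1 - u) *\<^sub>R ofv b \<in> P"
        using assms x add_point unfolding convex_def u_def by auto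
      moreover have "ofv (\<lambda>j. a j + b j) = real (Suc k) *\<^sub>R (u *\<^sub>R x + (1 - u) *\<^sub>R ofv b)"
        by (simp add: ofv_add x u_def scaleR_add_right field_simps)
      ultimately show ?thesis by (auto simp: dilate_points_def)
    qed
  qed (simp add: dilate_points_def)
qed

lemma expo_lattice_sums_add:
  "x \<in> case_prod expo ` lattice_sums P \<Longrightarrow> y \<in> case_prod expo ` lattice_sums P
    \<Longrightarrow> x + y \<in> case_prod expo ` lattice_sums P"
  by (force simp: expo_add dest: lattice_sums_add)

lemma keys_subset_of_polytopal_ring:
  "p \<in> (polytopal_ring P :: ('n::finite, 'k::field) Spoly set)
    \<Longrightarrow> Poly_Mapping.keys p \<subseteq> case_prod expo ` lattice_sums P"
  unfolding polytopal_ring_def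
proof (induction rule: alg_gen.induct)
  case (gen g)
  then obtain a where "g = monom_S (expo a 1)" "ofv a \<in> P" by auto
  moreover from \<open>ofv a \<in> P\<close> have "(a, 1) \<in> lattice_sums P"
    using lattice_sums.add_point[OF lattice_sums.zero] by fastforce
  ultimately show ?case by (force simp: monom_S_def)
next
  case one
  have "(0 :: 'n option \<Rightarrow>\<^sub>0 nat) \<in> case_prod expo ` lattice_sums P"
    using lattice_sums.zero by (force simp: expo_zero[symmetric])
  then show ?case by simp
next
  case (scal p c)
  have "Poly_Mapping.keys (Poly_Mapping.single 0 c * p) \<subseteq> Poly_Mapping.keys p"
    using keys_mult[of "Poly_Mapping.single 0 c" p] by (auto split: if_splits)
  with scal show ?case by blast
next
  case (add p q)
  then show ?case using keys_add[of p q] by auto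
next
  case (mult p q)
  have "{a + b |a b. a \<in> Poly_Mapping.keys p \<and> b \<in> Poly_Mapping.keys q} \<subseteq> case_prod expo ` lattice_sums P"
    using mult.IH by (blast intro: expo_lattice_sums_add)
  then show ?case using keys_mult[of p q] by blast
qed

lemma monom_S_expo_in_polytopal_ring:
  "(a, k) \<in> lattice_sums P \<Longrightarrow> monom_S (expo a k) \<in> (polytopal_ring P :: ('n::finite, 'k::field) Spoly set)"
  unfolding polytopal_ring_def
proof (induction rule: lattice_sums.induct)
  case zero
  then show ?case by (simp add: expo_zero monom_S_def alg_gen.one)
next
  case (add_point a k b)
  have "monom_S (expo (\<lambda>j. a j + b j) (Suc k)) = (monom_S (expo a k) * monom_S (expo b 1) :: ('n, 'k) Spoly)"
    by (simp only: monom_S_add[symmetric] expo_add) simp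
  with add_point show ?case by (auto intro: alg_gen.mult alg_gen.gen)
qed

lemma polytopal_ring_eq_keys:
  "polytopal_ring P = {p :: ('n::finite, 'k::field) Spoly. Poly_Mapping.keys p \<subseteq> case_prod expo ` lattice_sums P}"
proof (intro set_eqI iffI)
  fix p :: "('n, 'k) Spoly"
  assume keys: "p \<in> {p. Poly_Mapping.keys p \<subseteq> case_prod expo ` lattice_sums P}"
  have "p = (\<Sum>m\<in>Poly_Mapping.keys p. Poly_Mapping.single 0 (Poly_Mapping.lookup p m) * monom_S m)"
    by (simp add: single_0_mult_monom_S sum_single_lookup_keys)
  also have "\<dots> \<in> polytopal_ring P"
    unfolding polytopal_ring_def
  proof (intro alg_gen_sum alg_gen.scal)
    fix m assume "m \<in> Poly_Mapping.keys p"
    with keys obtain a k where "m = expo a k" "(a, k) \<in> lattice_sums P" by auto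
    then show "monom_S m \<in> alg_gen {monom_S (expo a 1) |a. ofv a \<in> P}"
      using monom_S_expo_in_polytopal_ring unfolding polytopal_ring_def by blast
  qed simp
  finally show "p \<in> polytopal_ring P" .
qed (rule CollectI, rule keys_subset_of_polytopal_ring)

lemma ehrhart_ring_eq_keys:
  "ehrhart_ring P = {p :: ('n::finite, 'k::field) Spoly. Poly_Mapping.keys p \<subseteq> case_prod expo ` dilate_points P}"
proof -
  have "ehrhart_exps P = case_prod expo ` dilate_points P"
    unfolding ehrhart_exps_def dilate_points_def by force
  then show ?thesis unfolding ehrhart_ring_def monomial_span_eq_keys by simp
qed

lemma ehrhart_ring_eq_polytopal_ring_iff_IDP:
  assumes "convex P"
  shows "(ehrhart_ring P = (polytopal_ring P :: ('n::finite, 'k::field) Spoly set)) \<longleftrightarrow> IDP P"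
  using lattice_sums_subset_dilate_points[OF assms]
  unfolding ehrhart_ring_eq_keys polytopal_ring_eq_keys keys_subset_sets_eq_iff
    inj_image_eq_iff[OF inj_expo] IDP_def
  by auto

locale lattice_pyramid =
  fixes S :: "(real^'n::finite) set" and b :: "'n \<Rightarrow> nat" and i :: 'n
  assumes apex_in: "ofv b \<in> S" and apex_height: "b i = 1"
    and base_height: "\<And>s. s \<in> S \<Longrightarrow> s \<noteq> ofv b \<Longrightarrow> s $ i = 0"
    and nonneg: "\<And>s j. s \<in> S \<Longrightarrow> 0 \<le> s $ j"
begin

abbreviation base :: "(real^'n) set" where
  "base \<equiv> S - {ofv b}"

lemma convex_hull_base_height: "y \<in> convex hull base \<Longrightarrow> y $ i = 0"
proof -
  have "convex hull base \<subseteq> {y. y $ i = 0}"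
    by (rule hull_minimal) (auto simp: base_height convex_def)
  then show "y \<in> convex hull base \<Longrightarrow> y $ i = 0" by blast
qed

lemma convex_hull_nonneg: "y \<in> convex hull S \<Longrightarrow> 0 \<le> y $ j"
proof -
  have "convex hull S \<subseteq> {y. 0 \<le> y $ j}"
    by (rule hull_minimal) (auto simp: nonneg convex_def)
  then show "y \<in> convex hull S \<Longrightarrow> 0 \<le> y $ j" by blast
qed

lemma convex_hull_decompose:
  assumes "y \<in> convex hull S"
  obtains h z where "0 \<le> h" "h \<le> 1" "y = h *\<^sub>R ofv b + (1 - h) *\<^sub>R z"
    "h = 1 \<or> z \<in> convex hull base" "y $ i = h"
proof -
  have apex_i: "ofv b $ i = 1" by (simp add: apex_height)
  have y: "y \<in> convex hull (insert (ofv b) base)"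
    using assms apex_in insert_Diff by metis
  show thesis
  proof (cases "base = {}")
    case True
    with y have "y = ofv b" by simp
    with apex_i show thesis by (intro that[of 1 0]) auto
  next
    case False
    with y obtain u z where "0 \<le> u" "u \<le> 1" "z \<in> convex hull base"
        "y = (1 - u) *\<^sub>R ofv b + u *\<^sub>R z"
      unfolding convex_hull_insert_alt by (auto split: if_splits)
    with apex_i convex_hull_base_height show thesis by (intro that[of "1 - u" z]) auto
  qed
qed

lemma convex_hull_base_iff: "y \<in> convex hull base \<longleftrightarrow> y \<in> convex hull S \<and> y $ i = 0"
proof
  show "y \<in> convex hull base \<Longrightarrow> y \<in> convex hull S \<and> y $ i = 0"
    using hull_mono[of base S] convex_hull_base_height by auto
next
  assume "y \<in> convex hull S \<and> y $ i = 0"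
  then show "y \<in> convex hull base"
    by (elim conjE convex_hull_decompose) auto
qed

lemma lattice_sums_base:
  "(a, k) \<in> lattice_sums (convex hull S) \<Longrightarrow> a i = 0 \<Longrightarrow> (a, k) \<in> lattice_sums (convex hull base)"
proof (induction rule: lattice_sums.induct)
  case (add_point a k c)
  then have "ofv c \<in> convex hull base"
    by (simp add: convex_hull_base_iff)
  with add_point show ?case by (auto intro: lattice_sums.add_point)
qed (rule lattice_sums.zero)

lemma IDP_base_if_IDP:
  assumes "IDP (convex hull S)"
  shows "IDP (convex hull base)"
  unfolding IDP_def
proof clarify
  fix a k assume ak: "(a, k) \<in> dilate_points (convex hull base)"
  show "(a, k) \<in> lattice_sums (convex hull base)"
  proof (cases "k = 0 \<and> a = (\<lambda>_. 0)")
    case True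
    then show ?thesis using lattice_sums.zero by auto
  next
    case False
    then obtain x where x: "x \<in> convex hull base" "ofv a = real k *\<^sub>R x"
      using ak by (auto simp: dilate_points_def)
    then have "(a, k) \<in> dilate_points (convex hull S)"
      by (auto simp: dilate_points_def convex_hull_base_iff)
    moreover have "real (a i) = 0"
      using arg_cong[OF x(2), of "\<lambda>v. v $ i"] x(1) by (simp add: convex_hull_base_iff)
    ultimately show ?thesis
      using assms lattice_sums_base unfolding IDP_def by auto
  qed
qed

text \<open>The apex coordinate \<open>m = a i\<close> of a lattice point of \<open>k\<cdot>conv S\<close> counts how many copies
  of the apex to split off; the remainder lies in \<open>(k - m)\<cdot>conv base\<close>.\<close>

lemma dilate_points_split_apex:
  assumes "(a, k) \<in> dilate_points (convex hull S)"
  shows "\<exists>a' k' m. (a', k') \<in> dilate_points (convex hull base) \<and> a = (\<lambda>j. a' j + m * b j) \<and> k = k' + m"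
proof (cases "k = 0 \<and> a = (\<lambda>_. 0)")
  case True
  then show ?thesis by (intro exI[of _ a] exI[of _ k] exI[of _ 0]) (auto simp: dilate_points_def)
next
  case False
  with assms obtain y where y: "y \<in> convex hull S" "ofv a = real k *\<^sub>R y"
    by (auto simp: dilate_points_def)
  then obtain h z where h: "0 \<le> h" "h \<le> 1" "y = h *\<^sub>R ofv b + (1 - h) *\<^sub>R z"
    "h = 1 \<or> z \<in> convex hull base" "y $ i = h"
    by (elim convex_hull_decompose)
  define m where "m = a i"
  have real_m: "real m = real k * h"
    using arg_cong[OF y(2), of "\<lambda>v. v $ i"] h(5) by (simp add: m_def)
  have a_coord: "real (a j) = real m * real (b j) + real k * (1 - h) * z $ j" for j
  proof -
    have "real (a j) = real k * (h * real (b j) + (1 - h) * z $ j)"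
      using arg_cong[OF y(2), of "\<lambda>v. v $ j"] h(3) by simp
    then show ?thesis using real_m by (simp add: algebra_simps)
  qed
  have base_part_nonneg: "0 \<le> (1 - h) * z $ j" for j
  proof (cases "h = 1")
    case False
    with h(4) have "z \<in> convex hull S" using hull_mono[of base S] by blast
    with h(2) show ?thesis by (simp add: convex_hull_nonneg)
  qed simp
  have apex_part_le: "m * b j \<le> a j" for j
  proof -
    have "real (m * b j) \<le> real (a j)"
      using a_coord[of j] base_part_nonneg[of j] by (simp add: mult.assoc)
    then show ?thesis by linarith
  qed
  have "m \<le> k"
    using real_m h(2) mult_left_le[of h "real k"] by (simp add: of_nat_le_iff[symmetric])
  define a' where "a' = (\<lambda>j. a j - m * b j)"
  define k' where "k' = k - m"
  have ofv_a': "ofv a' = (real k * (1 - h)) *\<^sub>R z"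
    using a_coord apex_part_le by (simp add: a'_def vec_eq_iff of_nat_diff)
  have "(a', k') \<in> dilate_points (convex hull base)"
  proof (cases "h = 1")
    case True
    then show ?thesis using ofv_a' real_m by (simp add: dilate_points_def k'_def ofv_eq_0_iff)
  next
    case False
    have "real k' = real k * (1 - h)" using real_m \<open>m \<le> k\<close> by (simp add: k'_def of_nat_diff algebra_simps)
    with False h(4) ofv_a' show ?thesis by (auto simp: dilate_points_def)
  qed
  with apex_part_le \<open>m \<le> k\<close> show ?thesis
    by (intro exI[of _ a'] exI[of _ k'] exI[of _ m]) (auto simp: a'_def k'_def)
qed

lemma IDP_if_IDP_base:
  assumes "IDP (convex hull base)"
  shows "IDP (convex hull S)"
  unfolding IDP_def
proof clarify
  fix a k assume "(a, k) \<in> dilate_points (convex hull S)"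
  then obtain a' k' m where split: "(a', k') \<in> dilate_points (convex hull base)"
    "a = (\<lambda>j. a' j + m * b j)" "k = k' + m"
    using dilate_points_split_apex by blast
  with assms have "(a', k') \<in> lattice_sums (convex hull S)"
    unfolding IDP_def using hull_mono[of base S] by (blast intro: lattice_sums_mono)
  then show "(a, k) \<in> lattice_sums (convex hull S)"
    using lattice_sums_add_multiple[of a' k' _ b m] apex_in split(2,3) by (simp add: hull_inc)
qed

lemma IDP_pyramid_iff: "IDP (convex hull S) \<longleftrightarrow> IDP (convex hull base)"
  using IDP_base_if_IDP IDP_if_IDP_base by blast

end

lemma vertex_vec_nth: "vertex_vec f w $ x = (if w \<in> f x then 1 else 0)"
  by (simp add: vertex_vec_def)

lemma ofv_vertex_indicator: "ofv (\<lambda>x. if w \<in> f x then 1 else 0) = vertex_vec f w"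
  by (simp add: vec_eq_iff vertex_vec_nth)

lemma lattice_pyramid_closed_vertex:
  assumes "f x = {v}" "v \<in> U"
  shows "lattice_pyramid (vertex_vec f ` U) (\<lambda>x. if v \<in> f x then 1 else 0) x"
  using assms by unfold_locales (auto simp: ofv_vertex_indicator vertex_vec_nth)

lemma IDP_remove_closed_vertices:
  fixes f :: "'n::finite \<Rightarrow> 'v set"
  assumes "finite D" "\<forall>v\<in>D. closed_vertex f v" "W \<inter> D = {}"
  shows "IDP (convex hull (vertex_vec f ` (W \<union> D))) \<longleftrightarrow> IDP (convex hull (vertex_vec f ` W))"
  using assms
proof (induction D rule: finite_induct)
  case (insert v D)
  obtain x where fx: "f x = {v}"
    using insert.prems unfolding closed_vertex_def hg_edges_def by auto
  let ?U = "W \<union> insert v D"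
  interpret lattice_pyramid "vertex_vec f ` ?U" "\<lambda>x. if v \<in> f x then 1 else 0" x
    by (rule lattice_pyramid_closed_vertex[of f x v]) (simp_all add: fx)
  have distinct: "vertex_vec f w \<noteq> vertex_vec f v" if "w \<noteq> v" for w
    using that fx by (auto simp: vec_eq_iff vertex_vec_nth)
  have "vertex_vec f ` ?U - {vertex_vec f v} = vertex_vec f ` (W \<union> D)"
  proof
    show "vertex_vec f ` (W \<union> D) \<subseteq> vertex_vec f ` ?U - {vertex_vec f v}"
      using distinct insert.hyps(2) insert.prems(2) by fastforce
  qed auto
  then show ?case
    using IDP_pyramid_iff insert by (simp add: ofv_vertex_indicator)
qed simp

theorem proposition3p3:
  fixes V :: "'v set" and f :: "'n::finite \<Rightarrow> 'v set" and W :: "'v set"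
  assumes "labeled_hypergraph V f"
    and "separated V f"
    and "W = {v \<in> V. \<not> closed_vertex f v}"
  shows "(ehrhart_ring (hg_polytope V f) = (polytopal_ring (hg_polytope V f) :: ('n, 'k::field) Spoly set))
     \<longleftrightarrow> (ehrhart_ring (hg_polytope W (induced f W)) = (polytopal_ring (hg_polytope W (induced f W)) :: ('n, 'k) Spoly set))"
proof -
  define D where "D = {v \<in> V. closed_vertex f v}"
  have "finite D" using assms(1) by (simp add: labeled_hypergraph_def D_def)
  have V: "V = W \<union> D" using assms(3) by (auto simp: D_def)
  have induced: "vertex_vec (induced f W) ` W = vertex_vec f ` W"
    by (auto simp: vertex_vec_def induced_def)
  have "ehrhart_ring (hg_polytope V f) = (polytopal_ring (hg_polytope V f) :: ('n, 'k) Spoly set)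
      \<longleftrightarrow> IDP (convex hull (vertex_vec f ` (W \<union> D)))"
    unfolding hg_polytope_def V by (rule ehrhart_ring_eq_polytopal_ring_iff_IDP) simp
  also have "\<dots> \<longleftrightarrow> IDP (convex hull (vertex_vec f ` W))"
    using \<open>finite D\<close> assms(3) by (intro IDP_remove_closed_vertices) (auto simp: D_def)
  also have "\<dots> \<longleftrightarrow> ehrhart_ring (hg_polytope W (induced f W)) = (polytopal_ring (hg_polytope W (induced f W)) :: ('n, 'k) Spoly set)"
    unfolding hg_polytope_def induced by (rule ehrhart_ring_eq_polytopal_ring_iff_IDP[symmetric]) simp
  finally show ?thesis .
qed

end
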